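(* Let $X$ be a separable topological space, let $Y$ be a scattered compact space, and let $f:X\times Y\to\overline{\mathbb R}$ be a separately continuous function. Then $(\wedge_f,\vee_f)$ is a stable pair of Hahn on $X$.
   Context: Compact spaces are Hausdorff; $Y$ is scattered if every non-empty subset has a point isolated in it. $\overline{\mathbb R}=[-\infty,+\infty]$. $\wedge_f(x)=\inf_{y\in Y}f(x,y)$, $\vee_f(x)=\sup_{y\in Y}f(x,y)$. A pair $(g,h)$ of functions $X\to\overline{\mathbb R}$ is a stable pair of Hahn if there are continuous $u_n:X\to\overline{\mathbb R}$ with $g(x)=\min_{n\in\mathbb N}u_n(x)$ and $h(x)=\max_{n\in\mathbb N}u_n(x)$ for all $x\in X$ (attained). *)

theory Defs
  imports "HOL-Analysis.Analysis"
begin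

definition separable_space :: "'a::topological_space itself \<Rightarrow> bool" where
  "separable_space _ \<longleftrightarrow> (\<exists>D::'a set. countable D \<and> closure D = UNIV)"

definition scattered_space :: "'a::topological_space itself \<Rightarrow> bool" where
  "scattered_space _ \<longleftrightarrow>
     (\<forall>S::'a set. S \<noteq> {} \<longrightarrow> (\<exists>y\<in>S. \<exists>U. open U \<and> U \<inter> S = {y}))"

definition separately_continuous :: "('a::topological_space \<times> 'b::topological_space \<Rightarrow> 'c::topological_space) \<Rightarrow> bool" where
  "separately_continuous f \<longleftrightarrow>
     (\<forall>x. continuous_on UNIV (\<lambda>y. f (x, y))) \<and> (\<forall>y. continuous_on UNIV (\<lambda>x. f (x, y)))"

definition stable_pair_Hahn :: "('a::topological_space \<Rightarrow> ereal) \<Rightarrow> ('a \<Rightarrow> ereal) \<Rightarrow> bool" where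
  "stable_pair_Hahn g h \<longleftrightarrow>
     (\<exists>u::nat \<Rightarrow> 'a \<Rightarrow> ereal. (\<forall>n. continuous_on UNIV (u n)) \<and>
        (\<forall>x. (\<exists>n. u n x = g x) \<and> (\<forall>n. g x \<le> u n x) \<and>
             (\<exists>n. u n x = h x) \<and> (\<forall>n. u n x \<le> h x)))"

definition inf_f :: "('a \<times> 'b \<Rightarrow> ereal) \<Rightarrow> 'a \<Rightarrow> ereal" where
  "inf_f f x = (INF y. f (x, y))"

definition sup_f :: "('a \<times> 'b \<Rightarrow> ereal) \<Rightarrow> 'a \<Rightarrow> ereal" where
  "sup_f f x = (SUP y. f (x, y))"

end

theory Submission
  imports Defs
begin

(* Fix a countable dense sequence (d n) in X. By continuity in x, the section f(-, y) is
   determined by the sequence Q y = (f (d n, y))_n, and Q : Y -> ereal^nat is continuous.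
   A continuous image of a compact scattered space in a Hausdorff space is scattered
   (take a minimal closed set whose image covers the closure of the given subset; the image
   of one of its isolated points is isolated), and a scattered subset of a second countable
   space is countable. Hence f has only countably many sections u n. Each f(x, -) attains
   its infimum and supremum on the compact space Y, so both values are values of some u n. *)

definition scattered_on :: "'a::topological_space set \<Rightarrow> bool" where
  "scattered_on K \<longleftrightarrow> (\<forall>S\<subseteq>K. S \<noteq> {} \<longrightarrow> (\<exists>y\<in>S. \<exists>U. open U \<and> U \<inter> S = {y}))"

lemma scattered_onI:
  "(\<And>S. S \<subseteq> K \<Longrightarrow> S \<noteq> {} \<Longrightarrow> \<exists>y\<in>S. \<exists>U. open U \<and> U \<inter> S = {y}) \<Longrightarrow> scattered_on K"
  unfolding scattered_on_def by blast

lemma scattered_onD: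
  "scattered_on K \<Longrightarrow> S \<subseteq> K \<Longrightarrow> S \<noteq> {} \<Longrightarrow> \<exists>y\<in>S. \<exists>U. open U \<and> U \<inter> S = {y}"
  unfolding scattered_on_def by simp

lemma scattered_space_iff_scattered_on_UNIV:
  "scattered_space TYPE('a::topological_space) \<longleftrightarrow> scattered_on (UNIV :: 'a set)"
  by (simp add: scattered_space_def scattered_on_def)

lemma scattered_on_imp_countable:
  fixes K :: "'a::second_countable_topology set"
  assumes "scattered_on K"
  shows "countable K"
proof -
  obtain \<B> :: "'a set set" where "countable \<B>" "topological_basis \<B>"
    using ex_countable_basis by blast
  \<comment> \<open>A point isolated in \<open>K - U\<close> would have a basic neighbourhood
     with countable trace on \<open>K\<close>.\<close>
  define U where "U = (\<Union>B\<in>{B \<in> \<B>. countable (B \<inter> K)}. B \<inter> K)"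
  have "countable U"
    unfolding U_def using \<open>countable \<B>\<close> by (intro countable_UN) auto
  have "K - U = {}"
  proof (rule ccontr)
    assume "K - U \<noteq> {}"
    then obtain y V where y: "y \<in> K - U" "open V" "V \<inter> (K - U) = {y}"
      by (metis scattered_onD[OF assms Diff_subset])
    then have "y \<in> V"
      by blast
    then obtain B where B: "B \<in> \<B>" "y \<in> B" "B \<subseteq> V"
      by (rule topological_basisE[OF \<open>topological_basis \<B>\<close> \<open>open V\<close>])
    have "B \<inter> K \<subseteq> insert y U"
      using B(3) y(3) by auto
    then have "countable (B \<inter> K)"
      by (rule countable_subset) (use \<open>countable U\<close> in simp)
    then have "B \<inter> K \<subseteq> U"
      unfolding U_def using B(1) by blast
    then show False
      using y(1) B(2) by blast
  qed
  then have "K \<subseteq> U"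
    by blast
  then show ?thesis
    using \<open>countable U\<close> by (rule countable_subset)
qed

lemma subset_Zorn_minimal_nonempty:
  assumes "\<A> \<noteq> {}" and ch: "\<And>\<C>. \<lbrakk>\<C> \<noteq> {}; subset.chain \<A> \<C>\<rbrakk> \<Longrightarrow> \<Inter>\<C> \<in> \<A>"
  shows "\<exists>M\<in>\<A>. \<forall>X\<in>\<A>. X \<subseteq> M \<longrightarrow> X = M"
proof -
  have "\<exists>M\<in>uminus ` \<A>. \<forall>X\<in>uminus ` \<A>. M \<subseteq> X \<longrightarrow> X = M"
  proof (rule subset_Zorn_nonempty)
    show "uminus ` \<A> \<noteq> {}" using assms(1) by simp
  next
    fix \<C> assume "\<C> \<noteq> {}" "subset.chain (uminus ` \<A>) \<C>"
    then have "subset.chain \<A> (uminus ` \<C>)"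
      by (auto simp: subset_chain_def)
    then have "\<Inter>(uminus ` \<C>) \<in> \<A>"
      using \<open>\<C> \<noteq> {}\<close> by (intro ch) auto
    moreover have "\<Union>\<C> = - \<Inter>(uminus ` \<C>)" by auto
    ultimately show "\<Union>\<C> \<in> uminus ` \<A>" by (metis image_eqI)
  qed
  then obtain N where "N \<in> \<A>" and max: "\<And>X. X \<in> \<A> \<Longrightarrow> - N \<subseteq> - X \<Longrightarrow> - X = - N"
    by auto
  show ?thesis
  proof (intro bexI ballI impI)
    fix X assume "X \<in> \<A>" "X \<subseteq> N"
    then show "X = N"
      using max[of X] by simp
  qed (rule \<open>N \<in> \<A>\<close>)
qed

lemma compact_Int_Inter_chain_nonempty:
  assumes "compact S" "\<C> \<noteq> {}" "subset.chain \<A> \<C>"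
    and "\<And>T. T \<in> \<C> \<Longrightarrow> closed T" "\<And>T. T \<in> \<C> \<Longrightarrow> S \<inter> T \<noteq> {}"
  shows "S \<inter> \<Inter>\<C> \<noteq> {}"
proof (rule compact_imp_fip[OF \<open>compact S\<close> assms(4)])
  fix \<F> assume "finite \<F>" "\<F> \<subseteq> \<C>"
  show "S \<inter> \<Inter>\<F> \<noteq> {}"
  proof (cases "\<F> = {}")
    case True
    obtain T where "T \<in> \<C>"
      using assms(2) by blast
    then show ?thesis
      using assms(5)[of T] True by auto
  next
    case False
    have "subset.chain \<C> \<F>"
      unfolding subset_chain_def
    proof (intro conjI ballI)
      show "\<F> \<subseteq> \<C>"
        by fact
      fix X Y assume "X \<in> \<F>" "Y \<in> \<F>"
      then have "X \<in> \<C>" "Y \<in> \<C>"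
        using \<open>\<F> \<subseteq> \<C>\<close> by (auto simp only: subsetD)
      then show "X \<subseteq> Y \<or> Y \<subseteq> X"
        using assms(3) unfolding subset_chain_def by simp
    qed
    then have "\<Inter>\<F> \<in> \<C>"
      using Inter_in_chain[OF \<open>finite \<F>\<close> False] \<open>\<F> \<subseteq> \<C>\<close> by blast
    then show ?thesis
      by (rule assms(5))
  qed
qed

lemma Hausdorff_space_euclidean_t2: "Hausdorff_space (euclidean :: 'a::t2_space topology)"
  unfolding Hausdorff_space_def disjnt_def using hausdorff by fastforce

text \<open>Function spaces carry no \<open>t2_space\<close> instance, so their Hausdorff property is used
  through \<open>kc_space\<close> (compact sets are closed).\<close>

lemma kc_space_euclidean_fun: "kc_space (euclidean :: ('i \<Rightarrow> 'a::t2_space) topology)"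
  unfolding euclidean_product_topology[symmetric]
  by (intro Hausdorff_imp_kc_space) (simp add: Hausdorff_space_product_topology Hausdorff_space_euclidean_t2)

lemma kc_space_euclidean_compact_imp_closed:
  assumes "kc_space (euclidean :: 'a::topological_space topology)" "compact (K :: 'a set)"
  shows "closed K"
proof -
  have "compactin euclidean K"
    using assms(2) by (simp only: compactin_euclidean_iff)
  then have "closedin euclidean K"
    using assms(1) unfolding kc_space_def by blast
  then show ?thesis
    by (simp only: closed_closedin)
qed

lemma ex_minimal_closed_image_superset:
  fixes Q :: "'a::topological_space \<Rightarrow> 'b::topological_space"
  assumes "compact (UNIV :: 'a set)" "continuous_on UNIV Q" "kc_space (euclidean :: 'b topology)"
    and "K \<subseteq> range Q"
  obtains M where "closed M" "K \<subseteq> Q ` M" "\<And>M'. \<lbrakk>closed M'; M' \<subseteq> M; K \<subseteq> Q ` M'\<rbrakk> \<Longrightarrow> M' = M"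
proof -
  let ?\<A> = "{M. closed M \<and> K \<subseteq> Q ` M}"
  have "\<exists>M\<in>?\<A>. \<forall>X\<in>?\<A>. X \<subseteq> M \<longrightarrow> X = M"
  proof (rule subset_Zorn_minimal_nonempty)
    show "?\<A> \<noteq> {}" using assms(4) by blast
  next
    fix \<C> assume "\<C> \<noteq> {}" and ch: "subset.chain ?\<A> \<C>"
    then have C: "closed T" "K \<subseteq> Q ` T" if "T \<in> \<C>" for T
      using that by (auto simp: subset_chain_def)
    have "s \<in> Q ` \<Inter>\<C>" if "s \<in> K" for s
    proof -
      have "closed {s}"
        using assms(3) by (intro kc_space_euclidean_compact_imp_closed) auto
      then have "compact (Q -` {s})"
        using compact_Int_closed[OF assms(1) closed_vimage[OF _ assms(2)]] by simp
      then have "Q -` {s} \<inter> \<Inter>\<C> \<noteq> {}"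
        using \<open>\<C> \<noteq> {}\<close> ch
        by (rule compact_Int_Inter_chain_nonempty) (use C \<open>s \<in> K\<close> in blast)+
      then show ?thesis by blast
    qed
    then show "\<Inter>\<C> \<in> ?\<A>" using C by auto
  qed
  then obtain M where M: "M \<in> ?\<A>" and min: "\<forall>X\<in>?\<A>. X \<subseteq> M \<longrightarrow> X = M" ..
  show ?thesis
  proof (rule that)
    show "closed M" "K \<subseteq> Q ` M"
      using M by auto
    show "M' = M" if "closed M'" "M' \<subseteq> M" "K \<subseteq> Q ` M'" for M'
      using that by (intro min[rule_format]) auto
  qed
qed

lemma scattered_on_continuous_image:
  fixes Q :: "'a::topological_space \<Rightarrow> 'b::topological_space"
  assumes "compact (UNIV :: 'a set)" "scattered_on (UNIV :: 'a set)" "continuous_on UNIV Q"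
    and kc: "kc_space (euclidean :: 'b topology)"
  shows "scattered_on (range Q)"
proof (rule scattered_onI)
  fix S assume "S \<subseteq> range Q" "S \<noteq> {}"
  have "closed (range Q)"
    using kc compact_continuous_image[OF assms(3,1)] by (rule kc_space_euclidean_compact_imp_closed)
  then have "closure S \<subseteq> range Q"
    using \<open>S \<subseteq> range Q\<close> by (rule closure_minimal[rotated])
  then obtain M where "closed M" "closure S \<subseteq> Q ` M"
    and min: "\<And>M'. \<lbrakk>closed M'; M' \<subseteq> M; closure S \<subseteq> Q ` M'\<rbrakk> \<Longrightarrow> M' = M"
    using ex_minimal_closed_image_superset[OF assms(1,3) kc] by metis
  have "M \<noteq> {}"
    using \<open>closure S \<subseteq> Q ` M\<close> \<open>S \<noteq> {}\<close> closure_subset by fastforce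
  then obtain t V where "t \<in> M" "open V" and tV: "V \<inter> M = {t}"
    by (metis scattered_onD[OF assms(2) subset_UNIV])
  \<comment> \<open>By minimality, cutting \<open>V\<close> out of \<open>M\<close> uncovers a point of \<open>closure S\<close>,
     which can only be \<open>Q t\<close>.\<close>
  have "closed (M - V)"
    using \<open>closed M\<close> \<open>open V\<close> by (rule closed_Diff)
  have "t \<notin> M - V"
    using tV by blast
  then have "M - V \<noteq> M"
    using \<open>t \<in> M\<close> by blast
  then have not_covered: "\<not> closure S \<subseteq> Q ` (M - V)"
    using min[of "M - V"] \<open>closed (M - V)\<close> by blast
  define W where "W = - Q ` (M - V)"
  have "compact (M - V)"
    using compact_Int_closed[OF assms(1) \<open>closed (M - V)\<close>] by simp
  then have "open W"
    unfolding W_def using kc compact_continuous_image[OF continuous_on_subset[OF assms(3)]]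
    by (intro open_Compl kc_space_euclidean_compact_imp_closed) auto
  have W_closure: "W \<inter> closure S \<subseteq> {Q t}"
  proof
    fix s assume s: "s \<in> W \<inter> closure S"
    then obtain m where "m \<in> M" "Q m = s"
      using \<open>closure S \<subseteq> Q ` M\<close> by blast
    moreover have "m \<notin> M - V"
      using s \<open>Q m = s\<close> unfolding W_def by blast
    ultimately have "m = t"
      using tV by blast
    then show "s \<in> {Q t}"
      using \<open>Q m = s\<close> by simp
  qed
  obtain s where "s \<in> closure S" "s \<notin> Q ` (M - V)"
    using not_covered by blast
  then have "Q t \<in> W \<inter> closure S"
    using W_closure unfolding W_def by blast
  then have "W \<inter> S \<noteq> {}"
    using open_Int_closure_eq_empty[OF \<open>open W\<close>, of S] by auto
  moreover have "W \<inter> S \<subseteq> {Q t}"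
    using W_closure closure_subset[of S] by blast
  ultimately have WS: "W \<inter> S = {Q t}"
    by (simp add: subset_singleton_iff)
  show "\<exists>y\<in>S. \<exists>U. open U \<and> U \<inter> S = {y}"
  proof (intro bexI exI conjI)
    show "open W"
      by fact
    show "W \<inter> S = {Q t}"
      by fact
    show "Q t \<in> S"
      using WS by blast
  qed
qed

lemma continuous_on_UNIV_eq_on_dense:
  fixes g h :: "'a::topological_space \<Rightarrow> 'b::t2_space"
  assumes "closure D = UNIV" "continuous_on UNIV g" "continuous_on UNIV h"
    and "\<And>x. x \<in> D \<Longrightarrow> g x = h x"
  shows "g = h"
proof -
  have "closed {x. g x = h x}"
    using assms(2,3) by (rule closed_Collect_eq)
  then have "closure D \<subseteq> {x. g x = h x}"
    using assms(4) by (intro closure_minimal) auto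
  then show ?thesis
    using assms(1) by auto
qed

lemma countable_sections_if_scattered:
  fixes f :: "'a::topological_space \<times> 'b::topological_space \<Rightarrow> 'c::{t2_space, second_countable_topology}"
  assumes "separable_space TYPE('a)" "compact (UNIV :: 'b set)" "scattered_on (UNIV :: 'b set)"
    and "separately_continuous f"
  shows "countable (range (\<lambda>y x. f (x, y)))"
proof -
  obtain D :: "'a set" where "countable D" "closure D = UNIV"
    using assms(1) unfolding separable_space_def by blast
  have cont_x: "continuous_on UNIV (\<lambda>y. f (x, y))" and cont_y: "continuous_on UNIV (\<lambda>x. f (x, y))"
    for x y using assms(4) unfolding separately_continuous_def by auto
  define Q where "Q y = (\<lambda>n. f (from_nat_into D n, y))" for y
  have "continuous_on UNIV Q"
    unfolding Q_def by (intro continuous_on_coordinatewise_then_product cont_x)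
  then have "countable (range Q)"
    using assms(2,3) kc_space_euclidean_fun
    by (intro scattered_on_imp_countable scattered_on_continuous_image)
  have section_eq: "(\<lambda>x. f (x, y)) = (\<lambda>x. f (x, y'))" if "Q y = Q y'" for y y'
  proof (rule continuous_on_UNIV_eq_on_dense[OF \<open>closure D = UNIV\<close> cont_y cont_y])
    fix x assume "x \<in> D"
    then obtain n where "x = from_nat_into D n"
      using from_nat_into_surj[OF \<open>countable D\<close>] by metis
    then show "f (x, y) = f (x, y')"
      using fun_cong[OF that, of n] unfolding Q_def by simp
  qed
  have "range (\<lambda>y x. f (x, y)) \<subseteq> (\<lambda>q x. f (x, inv Q q)) ` range Q"
  proof
    fix s assume "s \<in> range (\<lambda>y x. f (x, y))"
    then obtain y where "s = (\<lambda>x. f (x, y))"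
      by blast
    moreover have "(\<lambda>x. f (x, y)) = (\<lambda>x. f (x, inv Q (Q y)))"
      by (intro section_eq) (simp add: f_inv_into_f)
    ultimately show "s \<in> (\<lambda>q x. f (x, inv Q q)) ` range Q"
      by blast
  qed
  then show ?thesis
    using \<open>countable (range Q)\<close> countable_subset by blast
qed

lemma continuous_INF_attained:
  fixes g :: "'a::topological_space \<Rightarrow> 'b::{complete_linorder, linorder_topology}"
  assumes "compact (UNIV :: 'a set)" "continuous_on UNIV g"
  obtains y where "(INF y. g y) = g y"
proof -
  obtain y where "\<forall>z. g y \<le> g z"
    using continuous_attains_inf[OF assms(1) _ assms(2)] by auto
  then have "(INF y. g y) = g y"
    by (intro INF_eqI) auto
  then show thesis
    by (rule that)
qed

lemma continuous_SUP_attained: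
  fixes g :: "'a::topological_space \<Rightarrow> 'b::{complete_linorder, linorder_topology}"
  assumes "compact (UNIV :: 'a set)" "continuous_on UNIV g"
  obtains y where "(SUP y. g y) = g y"
proof -
  obtain y where "\<forall>z. g z \<le> g y"
    using continuous_attains_sup[OF assms(1) _ assms(2)] by auto
  then have "(SUP y. g y) = g y"
    by (intro SUP_eqI) auto
  then show thesis
    by (rule that)
qed

lemma stable_pair_Hahn_if_countable_sections:
  fixes f :: "'a::topological_space \<times> 'b::topological_space \<Rightarrow> ereal"
  assumes "compact (UNIV :: 'b set)" "separately_continuous f"
    and "countable (range (\<lambda>y x. f (x, y)))"
  shows "stable_pair_Hahn (inf_f f) (sup_f f)"
proof -
  let ?sections = "range (\<lambda>y x. f (x, y))"
  define u where "u = from_nat_into ?sections"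
  have cont_x: "continuous_on UNIV (\<lambda>y. f (x, y))" and cont_y: "continuous_on UNIV (\<lambda>x. f (x, y))"
    for x y using assms(2) unfolding separately_continuous_def by auto
  have u_section: "\<exists>y. u n = (\<lambda>x. f (x, y))" for n
    unfolding u_def using from_nat_into[of ?sections n] by auto
  have section_u: "\<exists>n. u n x = f (x, y)" for x y
  proof -
    obtain n where "u n = (\<lambda>x. f (x, y))"
      unfolding u_def using from_nat_into_surj[OF assms(3)] by blast
    then have "u n x = f (x, y)"
      by simp
    then show ?thesis ..
  qed
  show ?thesis
    unfolding stable_pair_Hahn_def
  proof (intro exI[of _ u] conjI allI)
    show "continuous_on UNIV (u n)" for n
      using u_section[of n] cont_y by auto
  next
    fix x n
    obtain y0 where "(INF y. f (x, y)) = f (x, y0)"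
      by (rule continuous_INF_attained[OF assms(1) cont_x])
    then show "\<exists>n. u n x = inf_f f x"
      unfolding inf_f_def using section_u[of x y0] by simp
    obtain y1 where "(SUP y. f (x, y)) = f (x, y1)"
      by (rule continuous_SUP_attained[OF assms(1) cont_x])
    then show "\<exists>n. u n x = sup_f f x"
      unfolding sup_f_def using section_u[of x y1] by simp
    obtain y where "u n = (\<lambda>x. f (x, y))"
      using u_section by blast
    then show "inf_f f x \<le> u n x" "u n x \<le> sup_f f x"
      unfolding inf_f_def sup_f_def
      using INF_lower[of y UNIV "\<lambda>y. f (x, y)"] SUP_upper[of y UNIV "\<lambda>y. f (x, y)"] by simp_all
  qed
qed

theorem theorem4p2:
  fixes f :: "'a::topological_space \<times> 'b::t2_space \<Rightarrow> ereal"
  assumes "separable_space TYPE('a)"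
    and "compact (UNIV :: 'b set)"
    and "scattered_space TYPE('b)"
    and "separately_continuous f"
  shows "stable_pair_Hahn (inf_f f) (sup_f f)"
proof (rule stable_pair_Hahn_if_countable_sections)
  show "countable (range (\<lambda>y x. f (x, y)))"
    using assms
    by (intro countable_sections_if_scattered) (simp_all add: scattered_space_iff_scattered_on_UNIV)
qed (fact assms)+

end
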